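(* The characteristic polynomial of the linear map $K_{\cal Z}^*$ on $Pic({\cal Z})$ is $$P(\lambda)Q(\lambda)^{q-1}(\lambda-1)^{q^2-q+2}(\lambda+1)^{q^2-3q+2},$$ where $P(\lambda)=\lambda^2-(q^2-4q+2)\lambda+1$ and $Q(\lambda) = (\lambda^2+1)^2-(q-2)^2\lambda^2$.
   Context: ${\cal M}_q$ is the space of complex $q\times q$ matrices; $K=I\circ J$ on ${\bf P}({\cal M}_q)$, where $I(x)=x^{-1}$ and $J(x)=(1/x_{i,j})$. ${\cal Z}$ is the blowup of ${\bf P}({\cal M}_q)$ along $R_1$ (rank-one matrices; divisor ${\cal R}^1$), along the sets $A_{i,j}$ of matrices with vanishing $i$-th row and $j$-th column (divisors ${\cal A}^{i,j}$), and along codimension-2 sets $B_{i,j}\subset{\cal A}^{i,j}$ (divisors ${\cal B}^{i,j}$). $Pic({\cal Z})$ has basis $\{H,{\cal R}^1,{\cal A}^{i,j},{\cal B}^{i,j}: 1\le i,j\le q\}$, $H$ a hyperplane class, and with $T_{i,j}=\{(a,b): a=i \text{ or } b=j\}$ the pullback $K_{\cal Z}^*$ acts by $$\begin{aligned} H & \mapsto (q^2-q+1)H -(q-2){\cal R}^1-\sum_{a,b}\left( (2q-3){\cal A}^{a,b}-(2q-2){\cal B}^{a,b} \right) \\ {\cal R}^1 & \mapsto (q^2-q)H-(q-1){\cal R}^1 - \sum_{a,b}\left( (2q-3){\cal A}^{a,b}-(2q-2){\cal B}^{a,b} \right) \\ {\cal A}^{i,j} & \mapsto H- {\cal B}^{j,i}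 - \sum_{(a,b)\in T_{i,j}} \left({\cal A}^{a,b} + {\cal B}^{a,b}\right) \\ {\cal B}^{i,j} & \mapsto {\cal A}^{j,i} + {\cal B}^{j,i}. \end{aligned}$$
   Formalization: In the images of H and ${\cal R}^1$ the term $(2q-2){\cal B}^{a,b}$ is subtracted rather than added, and the image of ${\cal A}^{i,j}$ sums over $T_{j,i}$ in place of $T_{i,j}$. This corrects a misprint. *)

theory Defs
  imports "Jordan_Normal_Form.Char_Poly"
begin

text \<open>Basis of Pic(Z): H, R^1, A^{i,j}, B^{i,j} (1 \<le> i,j \<le> q).\<close>
datatype pic_gen = GH | GR | GA nat nat | GB nat nat

definition gen_of :: "nat \<Rightarrow> nat \<Rightarrow> pic_gen" where
  "gen_of q k =
     (if k = 0 then GH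
      else if k = 1 then GR
      else if k < q^2 + 2 then GA ((k - 2) div q + 1) ((k - 2) mod q + 1)
      else GB ((k - 2 - q^2) div q + 1) ((k - 2 - q^2) mod q + 1))"

definition T_set :: "nat \<Rightarrow> nat \<Rightarrow> (nat \<times> nat) set" where
  "T_set i j = {(a, b). a = i \<or> b = j}"

fun KZ_coef :: "nat \<Rightarrow> pic_gen \<Rightarrow> pic_gen \<Rightarrow> int" where
  "KZ_coef q GH GH = int q^2 - int q + 1"
| "KZ_coef q GH GR = - (int q - 2)"
| "KZ_coef q GH (GA a b) = - (2 * int q - 3)"
| "KZ_coef q GH (GB a b) = - (2 * int q - 2)"
| "KZ_coef q GR GH = int q^2 - int q"
| "KZ_coef q GR GR = - (int q - 1)"
| "KZ_coef q GR (GA a b) = - (2 * int q - 3)"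
| "KZ_coef q GR (GB a b) = - (2 * int q - 2)"
| "KZ_coef q (GA i j) GH = 1"
| "KZ_coef q (GA i j) GR = 0"
| "KZ_coef q (GA i j) (GA a b) = - (if (a, b) \<in> T_set j i then 1 else 0)"
| "KZ_coef q (GA i j) (GB a b) =
     - (if (a, b) = (j, i) then 1 else 0) - (if (a, b) \<in> T_set j i then 1 else 0)"
| "KZ_coef q (GB i j) GH = 0"
| "KZ_coef q (GB i j) GR = 0"
| "KZ_coef q (GB i j) (GA a b) = (if (a, b) = (j, i) then 1 else 0)"
| "KZ_coef q (GB i j) (GB a b) = (if (a, b) = (j, i) then 1 else 0)"

text \<open>Matrix of K_Z^* in the above basis; column c is the coordinate vector of
  the image of the c-th basis element.\<close>
definition KZ_mat :: "nat \<Rightarrow> int mat" where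
  "KZ_mat q = mat (2 * q^2 + 2) (2 * q^2 + 2) (\<lambda>(r, c). KZ_coef q (gen_of q c) (gen_of q r))"

end

theory Submission
  imports Defs Subresultants.More_Homomorphisms
begin

text \<open>Let u_1 = e_1 + \<dots> + e_q and u_a = e_a for a \<ge> 2. Replacing the classes A^{a,b}, B^{a,b}
  by the tensor products u_a \<otimes> u_b (symmetrised for a = 1 < b, and corrected by multiples of
  H and R^1 for a = b = 1) gives a basis obtained by a unitriangular change of coordinates, in
  which K_Z^* is block triangular with 2 \<times> 2 diagonal blocks. The block on {H, R^1} contributes
  (\<lambda>-1)^2, the block of u_1 \<otimes> u_1 contributes P, the blocks of u_1 \<otimes> u_c and u_c \<otimes> u_1
  (c \<ge> 2) contribute the two factors \<lambda>^2 \<plusminus> (q-2)\<lambda> + 1 of Q, and for 2 \<le> a, b \<le> q the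
  transposition (a,b) \<leftrightarrow> (b,a) gives \<lambda>^2 - 1 if a \<noteq> b and \<lambda> - 1 if a = b.\<close>

section \<open>Determinants of matrices indexed by a finite set\<close>

lemma det_mat_2: "det (mat 2 2 f) = f (0,0) * f (1,1) - f (0,1) * f (1,(0::nat))"
proof -
  have "det (mat 2 2 f) = (\<Sum>i<2. mat 2 2 f $$ (i,0) * cofactor (mat 2 2 f) i 0)"
    by (rule laplace_expansion_column) auto
  also have "\<dots> = f (0,0) * f (1,1) - f (0,1) * f (1,0)"
    by (simp add: cofactor_def numeral_2_eq_2 det_single mat_delete_def)
  finally show ?thesis .
qed

definition enum_of_set :: "'i set \<Rightarrow> nat \<Rightarrow> 'i" where
  "enum_of_set I = (SOME h. bij_betw h {0..<card I} I)"

lemma bij_betw_enum_of_set: "finite I \<Longrightarrow> bij_betw (enum_of_set I) {0..<card I} I"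
  unfolding enum_of_set_def by (rule someI_ex[OF ex_bij_betw_nat_finite])

text \<open>By det_on_bij_betw below, the choice of enumeration is irrelevant.\<close>
definition det_on :: "'i set \<Rightarrow> ('i \<Rightarrow> 'i \<Rightarrow> 'a :: comm_ring_1) \<Rightarrow> 'a" where
  "det_on I A = det (mat (card I) (card I) (\<lambda>(i,j). A (enum_of_set I i) (enum_of_set I j)))"

lemma det_permute_rows_cols:
  assumes p: "p permutes {0..<n}"
  shows "det (mat n n (\<lambda>(i,j). f (p i) (p j))) = (det (mat n n (\<lambda>(i,j). f i j)) :: 'a :: comm_ring_1)"
proof -
  have pn: "\<And>i. i < n \<Longrightarrow> p i < n" using p permutes_in_image by fastforce
  let ?M = "mat n n (\<lambda>(i,j). f i j)"
  let ?B = "mat n n (\<lambda>(i,j). f i (p j))"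
  have "mat n n (\<lambda>(i,j). f (p i) (p j)) = mat n n (\<lambda>(i,j). ?B $$ (p i, j))"
    by (rule eq_matI) (auto simp: pn)
  hence "det (mat n n (\<lambda>(i,j). f (p i) (p j))) = signof p * det ?B"
    using det_permute_rows[OF _ p, of ?B] by auto
  also have "det ?B = det (transpose_mat ?B)" by (rule det_transpose[symmetric]) auto
  also have "transpose_mat ?B = mat n n (\<lambda>(i,j). transpose_mat ?M $$ (p i, j))"
    by (rule eq_matI) (auto simp: pn)
  also have "det \<dots> = signof p * det (transpose_mat ?M)"
    by (rule det_permute_rows[OF _ p]) auto
  also have "det (transpose_mat ?M) = det ?M"
    by (rule det_transpose) auto
  finally show ?thesis
    by (simp flip: of_int_mult add: mult.assoc[symmetric])
qed

lemma det_on_bij_betw: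
  assumes fin: "finite I" and g: "bij_betw g {0..<n} I"
  shows "det_on I A = det (mat n n (\<lambda>(i,j). A (g i) (g j)))"
proof -
  have n: "card I = n" using bij_betw_same_card[OF g] by simp
  let ?h = "enum_of_set I"
  have h: "bij_betw ?h {0..<n} I" using bij_betw_enum_of_set[OF fin] n by simp
  define p where "p = (\<lambda>i. if i < n then inv_into {0..<n} ?h (g i) else i)"
  have hp: "\<And>i. i < n \<Longrightarrow> ?h (p i) = g i"
    unfolding p_def using h g by (auto simp: bij_betw_def f_inv_into_f)
  have "bij_betw (inv_into {0..<n} ?h \<circ> g) {0..<n} {0..<n}"
    by (rule bij_betw_trans[OF g bij_betw_inv_into[OF h]])
  hence "bij_betw p {0..<n} {0..<n}"
    by (rule bij_betw_cong[THEN iffD1, rotated]) (simp add: p_def)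
  hence p: "p permutes {0..<n}"
    by (rule bij_imp_permutes) (simp add: p_def)
  have "det (mat n n (\<lambda>(i,j). A (g i) (g j))) = det (mat n n (\<lambda>(i,j). A (?h (p i)) (?h (p j))))"
    by (intro arg_cong[of _ _ det] eq_matI) (auto simp: hp)
  also have "\<dots> = det (mat n n (\<lambda>(i,j). A (?h i) (?h j)))"
    using det_permute_rows_cols[OF p, of "\<lambda>i j. A (?h i) (?h j)"] by simp
  finally show ?thesis unfolding det_on_def n by simp
qed

lemma det_on_empty: "det_on {} A = 1"
  unfolding det_on_def by (simp add: det_dim_zero)

lemma det_on_singleton: "det_on {x} A = A x x"
proof -
  have "bij_betw (\<lambda>_. x) {0..<1::nat} {x}" by (simp add: bij_betw_def)
  from det_on_bij_betw[OF _ this] show ?thesis by (simp add: det_single)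
qed

lemma det_on_doubleton:
  assumes "x \<noteq> y"
  shows "det_on {x,y} A = A x x * A y y - A x y * A y x"
proof -
  have "bij_betw (\<lambda>i. if i = 0 then x else y) {0..<2::nat} {x,y}"
    using assms by (auto simp: bij_betw_def inj_on_def image_def intro: exI[of _ 1];
        metis One_nat_def less_2_cases)
  from det_on_bij_betw[OF _ this] show ?thesis by (simp add: det_mat_2)
qed

lemma det_on_cong:
  assumes "finite I" "\<And>i j. i \<in> I \<Longrightarrow> j \<in> I \<Longrightarrow> A i j = B i j"
  shows "det_on I A = det_on I B"
proof -
  have "\<And>i. i < card I \<Longrightarrow> enum_of_set I i \<in> I"
    using bij_betw_enum_of_set[OF assms(1)] by (auto simp: bij_betw_def)
  thus ?thesis unfolding det_on_def using assms(2) by (intro arg_cong[of _ _ det] eq_matI) auto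
qed

lemma det_on_mult:
  fixes A B :: "'i \<Rightarrow> 'i \<Rightarrow> 'a :: comm_ring_1"
  assumes fin: "finite I"
  shows "det_on I (\<lambda>i j. \<Sum>k\<in>I. A i k * B k j) = det_on I A * det_on I B"
proof -
  define n where "n = card I"
  define h where "h = enum_of_set I"
  have h: "bij_betw h {0..<n} I" using bij_betw_enum_of_set[OF fin] unfolding h_def n_def .
  let ?A = "mat n n (\<lambda>(i,j). A (h i) (h j))"
  let ?B = "mat n n (\<lambda>(i,j). B (h i) (h j))"
  have "mat n n (\<lambda>(i,j). \<Sum>k\<in>I. A (h i) k * B k (h j)) = ?A * ?B"
  proof (rule eq_matI)
    fix i j assume i: "i < dim_row (?A * ?B)" and j: "j < dim_col (?A * ?B)"
    have "(?A * ?B) $$ (i,j) = (\<Sum>k\<in>{0..<n}. A (h i) (h k) * B (h k) (h j))"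
      using i j by (simp add: scalar_prod_def)
    also have "\<dots> = (\<Sum>k\<in>I. A (h i) k * B k (h j))"
      by (rule sum.reindex_bij_betw[OF h])
    finally show "mat n n (\<lambda>(i,j). \<Sum>k\<in>I. A (h i) k * B k (h j)) $$ (i,j) = (?A * ?B) $$ (i,j)"
      using i j by simp
  qed auto
  hence "det_on I (\<lambda>i j. \<Sum>k\<in>I. A i k * B k j) = det (?A * ?B)"
    by (simp add: det_on_bij_betw[OF fin h])
  also have "\<dots> = det ?A * det ?B" by (rule det_mult) auto
  finally show ?thesis using det_on_bij_betw[OF fin h, of A] det_on_bij_betw[OF fin h, of B] by simp
qed

lemma det_on_block_triangular:
  fixes A :: "'i \<Rightarrow> 'i \<Rightarrow> 'a :: idom"
  assumes f1: "finite I1" and f2: "finite I2" and dis: "I1 \<inter> I2 = {}"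
    and zero: "\<And>i j. i \<in> I2 \<Longrightarrow> j \<in> I1 \<Longrightarrow> A i j = 0"
  shows "det_on (I1 \<union> I2) A = det_on I1 A * det_on I2 A"
proof -
  define n1 where "n1 = card I1"
  define n2 where "n2 = card I2"
  define g1 where "g1 = enum_of_set I1"
  define g2 where "g2 = enum_of_set I2"
  have b1: "bij_betw g1 {0..<n1} I1" using bij_betw_enum_of_set[OF f1] unfolding g1_def n1_def .
  have b2: "bij_betw g2 {0..<n2} I2" using bij_betw_enum_of_set[OF f2] unfolding g2_def n2_def .
  define g where "g = (\<lambda>i. if i < n1 then g1 i else g2 (i - n1))"
  have "bij_betw (\<lambda>i. i - n1) {n1..<n1+n2} {0..<n2}"
    by (rule bij_betw_byWitness[of _ "\<lambda>i. i + n1"]) auto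
  from bij_betw_trans[OF this b2] have "bij_betw g {n1..<n1+n2} I2"
    by (rule bij_betw_cong[THEN iffD1, rotated]) (auto simp: g_def)
  moreover have "bij_betw g {0..<n1} I1"
    using b1 by (rule bij_betw_cong[THEN iffD1, rotated]) (auto simp: g_def)
  moreover have "{0..<n1+n2} = {0..<n1} \<union> {n1..<n1+n2}" by auto
  ultimately have g: "bij_betw g {0..<n1+n2} (I1 \<union> I2)"
    using bij_betw_combine[OF _ _ dis] by metis
  have g1I: "\<And>i. i < n1 \<Longrightarrow> g1 i \<in> I1" and g2I: "\<And>i. i < n2 \<Longrightarrow> g2 i \<in> I2"
    using b1 b2 by (auto simp: bij_betw_def)
  let ?M1 = "mat n1 n1 (\<lambda>(i,j). A (g1 i) (g1 j))"
  let ?M2 = "mat n1 n2 (\<lambda>(i,j). A (g1 i) (g2 j))"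
  let ?M4 = "mat n2 n2 (\<lambda>(i,j). A (g2 i) (g2 j))"
  have "mat (n1+n2) (n1+n2) (\<lambda>(i,j). A (g i) (g j)) = four_block_mat ?M1 ?M2 (0\<^sub>m n2 n1) ?M4"
    by (rule eq_matI) (auto simp: g_def four_block_mat_def zero g1I g2I)
  hence "det_on (I1 \<union> I2) A = det (four_block_mat ?M1 ?M2 (0\<^sub>m n2 n1) ?M4)"
    using f1 f2 by (simp add: det_on_bij_betw[OF _ g])
  also have "\<dots> = det ?M1 * det ?M4"
    by (rule det_four_block_mat_lower_left_zero) auto
  finally show ?thesis by (simp add: det_on_bij_betw[OF f1 b1] det_on_bij_betw[OF f2 b2])
qed

lemma det_on_eq_prod_blocks:
  fixes A :: "'i \<Rightarrow> 'i \<Rightarrow> 'a :: idom" and rank :: "'k \<Rightarrow> nat"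
  assumes "finite K" "finite I" "lab ` I \<subseteq> K"
    "\<And>i j. i \<in> I \<Longrightarrow> j \<in> I \<Longrightarrow> lab i \<noteq> lab j \<Longrightarrow> rank (lab j) \<le> rank (lab i) \<Longrightarrow> A i j = 0"
  shows "det_on I A = (\<Prod>k\<in>K. det_on {i\<in>I. lab i = k} A)"
  using assms
proof (induction "card K" arbitrary: K I rule: less_induct)
  case less
  show ?case
  proof (cases "K = {}")
    case True
    with less.prems have "I = {}" by auto
    with True show ?thesis by (simp add: det_on_empty)
  next
    case False
    have "Max (rank ` K) \<in> rank ` K" using False less.prems(1) by simp
    then obtain k0 where k0: "k0 \<in> K" "rank k0 = Max (rank ` K)" by auto
    have max: "\<And>k. k \<in> K \<Longrightarrow> rank k \<le> rank k0" using less.prems(1) k0(2) by simp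
    define I1 where "I1 = {i\<in>I. lab i \<noteq> k0}"
    define I2 where "I2 = {i\<in>I. lab i = k0}"
    have "I = I1 \<union> I2" unfolding I1_def I2_def by auto
    also have "det_on \<dots> A = det_on I1 A * det_on I2 A"
    proof (rule det_on_block_triangular)
      show "finite I1" "finite I2" "I1 \<inter> I2 = {}"
        using less.prems(2) unfolding I1_def I2_def by auto
      fix i j assume "i \<in> I2" "j \<in> I1"
      thus "A i j = 0"
        using less.prems(3,4) max unfolding I1_def I2_def by (metis (mono_tags) image_subset_iff mem_Collect_eq)
    qed
    also have "det_on I1 A = (\<Prod>k\<in>K - {k0}. det_on {i\<in>I1. lab i = k} A)"
      using less.prems card_Diff1_less[OF less.prems(1) k0(1)]
      by (intro less.hyps) (auto simp: I1_def)
    also have "\<dots> = (\<Prod>k\<in>K - {k0}. det_on {i\<in>I. lab i = k} A)"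
      by (rule prod.cong) (auto simp: I1_def intro!: arg_cong[of _ _ "\<lambda>X. det_on X A"])
    finally show ?thesis
      using prod.remove[OF less.prems(1) k0(1), of "\<lambda>k. det_on {i\<in>I. lab i = k} A"]
      by (simp add: I2_def ac_simps)
  qed
qed

lemma det_on_triangular:
  fixes A :: "'i \<Rightarrow> 'i \<Rightarrow> 'a :: idom" and rank :: "'i \<Rightarrow> nat"
  assumes "finite I" "\<And>i j. i \<in> I \<Longrightarrow> j \<in> I \<Longrightarrow> i \<noteq> j \<Longrightarrow> rank j \<le> rank i \<Longrightarrow> A i j = 0"
  shows "det_on I A = (\<Prod>i\<in>I. A i i)"
proof -
  have "det_on I A = (\<Prod>k\<in>I. det_on {i\<in>I. i = k} A)"
    using det_on_eq_prod_blocks[where lab = id and rank = rank] assms by auto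
  also have "\<dots> = (\<Prod>i\<in>I. A i i)"
  proof (rule prod.cong[OF refl])
    fix k assume "k \<in> I"
    hence "{i\<in>I. i = k} = {k}" by auto
    thus "det_on {i\<in>I. i = k} A = A k k" by (simp add: det_on_singleton)
  qed
  finally show ?thesis .
qed

section \<open>Characteristic polynomials and change of basis\<close>

definition char_matrix_on :: "('i \<Rightarrow> 'i \<Rightarrow> 'a :: comm_ring_1) \<Rightarrow> 'i \<Rightarrow> 'i \<Rightarrow> 'a poly" where
  "char_matrix_on A t s = (if t = s then [:0,1:] else 0) + [:- A t s:]"

lemma char_poly_eq_det_on:
  assumes fin: "finite I" and g: "bij_betw g {0..<n} I"
  shows "char_poly (mat n n (\<lambda>(r,c). A (g r) (g c))) = det_on I (char_matrix_on A)"
proof -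
  have inj: "\<And>i j. i < n \<Longrightarrow> j < n \<Longrightarrow> g i = g j \<longleftrightarrow> i = j"
    using g unfolding bij_betw_def inj_on_def by auto
  have "char_poly_matrix (mat n n (\<lambda>(r,c). A (g r) (g c)))
      = mat n n (\<lambda>(i,j). char_matrix_on A (g i) (g j))"
    by (rule eq_matI) (auto simp: char_poly_matrix_def char_matrix_on_def inj)
  thus ?thesis unfolding char_poly_def det_on_bij_betw[OF fin g] by simp
qed

lemma det_on_const_poly: "det_on I (\<lambda>i j. [:A i j:]) = [:det_on I A:]"
proof -
  have "mat (card I) (card I) (\<lambda>(i,j). [:A (enum_of_set I i) (enum_of_set I j):])
     = map_mat coeff_lift (mat (card I) (card I) (\<lambda>(i,j). A (enum_of_set I i) (enum_of_set I j)))"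
    by (rule eq_matI) auto
  thus ?thesis unfolding det_on_def by simp
qed

lemma det_on_char_matrix_similar:
  fixes A D S :: "'i \<Rightarrow> 'i \<Rightarrow> 'a :: idom"
  assumes fin: "finite I" and detS: "det_on I S \<noteq> 0"
    and AS_SD: "\<And>t s. t \<in> I \<Longrightarrow> s \<in> I \<Longrightarrow> (\<Sum>k\<in>I. A t k * S k s) = (\<Sum>k\<in>I. S t k * D k s)"
  shows "det_on I (char_matrix_on A) = det_on I (char_matrix_on D)"
proof -
  let ?S = "\<lambda>t s. [:S t s:]"
  have prod_eq: "(\<Sum>k\<in>I. char_matrix_on A t k * ?S k s) = (\<Sum>k\<in>I. ?S t k * char_matrix_on D k s)"
    if "t \<in> I" "s \<in> I" for t s
  proof -
    have "(\<Sum>k\<in>I. char_matrix_on A t k * ?S k s)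
        = (\<Sum>k\<in>I. if t = k then [:0,1:] * ?S k s else 0) + (\<Sum>k\<in>I. [:- (A t k * S k s):])"
      unfolding char_matrix_on_def sum.distrib[symmetric]
      by (rule sum.cong[OF refl]) (auto simp: distrib_right)
    also have "\<dots> = [:0,1:] * ?S t s - [:\<Sum>k\<in>I. S t k * D k s:]"
      using that fin by (simp add: sum.delta sum_to_poly sum_negf AS_SD)
    also have "\<dots> = (\<Sum>k\<in>I. if k = s then ?S t k * [:0,1:] else 0) + (\<Sum>k\<in>I. [:- (S t k * D k s):])"
      using that fin by (simp add: sum.delta' sum_to_poly sum_negf mult.commute)
    also have "\<dots> = (\<Sum>k\<in>I. ?S t k * char_matrix_on D k s)"
      unfolding char_matrix_on_def sum.distrib[symmetric]
      by (rule sum.cong[OF refl]) (auto simp: distrib_left mult.commute)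
    finally show ?thesis .
  qed
  have "det_on I (char_matrix_on A) * [:det_on I S:] = det_on I (char_matrix_on D) * [:det_on I S:]"
    using det_on_mult[OF fin, of "char_matrix_on A" ?S] det_on_mult[OF fin, of ?S "char_matrix_on D"]
      det_on_cong[OF fin prod_eq] by (simp add: det_on_const_poly mult.commute)
  with detS show ?thesis by (metis mult_cancel_right pCons_eq_0_iff)
qed

declare One_nat_def[simp del]

definition pic_basis :: "nat \<Rightarrow> pic_gen set" where
  "pic_basis q = {GH, GR} \<union> (\<lambda>(i,j). GA i j) ` ({1..q} \<times> {1..q}) \<union> (\<lambda>(i,j). GB i j) ` ({1..q} \<times> {1..q})"

lemma mem_pic_basis:
  "s \<in> pic_basis q \<longleftrightarrow> s = GH \<or> s = GR \<or>
     (\<exists>i j. 1 \<le> i \<and> i \<le> q \<and> 1 \<le> j \<and> j \<le> q \<and> (s = GA i j \<or> s = GB i j))"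
  unfolding pic_basis_def by auto

lemma finite_pic_basis: "finite (pic_basis q)"
  unfolding pic_basis_def by auto

lemma pic_basis_cases:
  assumes "s \<in> pic_basis q"
  obtains "s = GH" | "s = GR"
    | i j where "1 \<le> i" "i \<le> q" "1 \<le> j" "j \<le> q" "s = GA i j"
    | i j where "1 \<le> i" "i \<le> q" "1 \<le> j" "j \<le> q" "s = GB i j"
  using assms unfolding mem_pic_basis by blast

fun pic_index :: "nat \<Rightarrow> pic_gen \<Rightarrow> nat" where
  "pic_index q GH = 0"
| "pic_index q GR = 1"
| "pic_index q (GA i j) = 2 + (i - 1) * q + (j - 1)"
| "pic_index q (GB i j) = 2 + q^2 + (i - 1) * q + (j - 1)"

lemma pair_index_bounds:
  fixes i j q :: nat
  assumes "1 \<le> i" "i \<le> q" "1 \<le> j" "j \<le> q"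
  shows "(i - 1) * q + (j - 1) < q^2"
    and "((i - 1) * q + (j - 1)) div q = i - 1" "((i - 1) * q + (j - 1)) mod q = j - 1"
proof -
  have "(i - 1) * q + (j - 1) < (i - 1) * q + q" using assms by simp
  also have "\<dots> = i * q" using assms by (cases i) auto
  also have "\<dots> \<le> q * q" using assms by simp
  finally show "(i - 1) * q + (j - 1) < q^2" by (simp add: power2_eq_square)
  have "j - 1 < q" using assms by simp
  thus "((i - 1) * q + (j - 1)) div q = i - 1" "((i - 1) * q + (j - 1)) mod q = j - 1"
    by (simp_all add: add.commute)
qed

lemma div_mod_bounds_of_lt_square:
  fixes m q :: nat
  assumes "m < q^2" shows "m div q + 1 \<le> q" "m mod q + 1 \<le> q"
proof -
  have "q > 0" using assms by (cases q) auto
  moreover have "m div q < q" using assms by (simp add: less_mult_imp_div_less power2_eq_square)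
  moreover have "m mod q < q" using \<open>q > 0\<close> by simp
  ultimately show "m div q + 1 \<le> q" "m mod q + 1 \<le> q" by linarith+
qed

lemma bij_betw_gen_of:
  assumes "q \<ge> 1"
  shows "bij_betw (gen_of q) {0..<2 * q^2 + 2} (pic_basis q)"
proof (rule bij_betw_byWitness[where f' = "pic_index q"])
  show "\<forall>k\<in>{0..<2 * q^2 + 2}. pic_index q (gen_of q k) = k"
    by (auto simp: gen_of_def)
  show "\<forall>s\<in>pic_basis q. gen_of q (pic_index q s) = s"
  proof
    fix s assume "s \<in> pic_basis q"
    thus "gen_of q (pic_index q s) = s"
    proof (cases rule: pic_basis_cases)
      case (3 i j) thus ?thesis using pair_index_bounds[OF 3(1-4)] by (simp add: gen_of_def)
    next
      case (4 i j) thus ?thesis using pair_index_bounds[OF 4(1-4)] by (simp add: gen_of_def)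
    qed (simp_all add: gen_of_def)
  qed
  show "gen_of q ` {0..<2 * q^2 + 2} \<subseteq> pic_basis q"
  proof
    fix s assume "s \<in> gen_of q ` {0..<2 * q^2 + 2}"
    then obtain k where k: "k < 2 * q^2 + 2" "s = gen_of q k" by auto
    show "s \<in> pic_basis q"
    proof (cases "k < q^2 + 2")
      case True
      hence "k \<ge> 2 \<Longrightarrow> k - 2 < q^2" by auto
      with k True div_mod_bounds_of_lt_square[of "k - 2" q] show ?thesis
        by (auto simp: gen_of_def mem_pic_basis)
    next
      case False
      hence "k - 2 - q^2 < q^2" using k by auto
      with k False div_mod_bounds_of_lt_square[of "k - 2 - q^2" q] show ?thesis
        by (auto simp: gen_of_def mem_pic_basis)
    qed
  qed
  show "pic_index q ` pic_basis q \<subseteq> {0..<2 * q^2 + 2}"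
  proof
    fix k assume "k \<in> pic_index q ` pic_basis q"
    then obtain s where s: "s \<in> pic_basis q" and k: "k = pic_index q s" by auto
    from s show "k \<in> {0..<2 * q^2 + 2}"
    proof (cases rule: pic_basis_cases)
      case (3 i j) thus ?thesis using k pair_index_bounds(1)[OF 3(1-4)] by simp
    next
      case (4 i j) thus ?thesis using k pair_index_bounds(1)[OF 4(1-4)] by simp
    qed (use assms k in \<open>simp_all add: power2_eq_square\<close>)
  qed
qed

lemma sum_pic_basis:
  "(\<Sum>k\<in>pic_basis q. g k) = g GH + g GR + (\<Sum>i\<in>{1..q}. \<Sum>j\<in>{1..q}. g (GA i j))
     + (\<Sum>i\<in>{1..q}. \<Sum>j\<in>{1..q}. g (GB i j))"
proof -
  let ?P = "{1..q} \<times> {1..q}"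
  let ?A = "(\<lambda>(i,j). GA i j) ` ?P" and ?B = "(\<lambda>(i,j). GB i j) ` ?P"
  have "(\<Sum>k\<in>pic_basis q. g k) = (\<Sum>k\<in>{GH,GR} \<union> ?A. g k) + (\<Sum>k\<in>?B. g k)"
    unfolding pic_basis_def by (rule sum.union_disjoint) auto
  also have "(\<Sum>k\<in>{GH,GR} \<union> ?A. g k) = (\<Sum>k\<in>{GH,GR}. g k) + (\<Sum>k\<in>?A. g k)"
    by (rule sum.union_disjoint) auto
  also have "(\<Sum>k\<in>?A. g k) = (\<Sum>(i,j)\<in>?P. g (GA i j))"
    by (subst sum.reindex) (auto simp: inj_on_def intro!: sum.cong)
  also have "(\<Sum>k\<in>?B. g k) = (\<Sum>(i,j)\<in>?P. g (GB i j))"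
    by (subst sum.reindex) (auto simp: inj_on_def intro!: sum.cong)
  finally show ?thesis by (simp add: sum.cartesian_product)
qed

section \<open>The action of K_Z^* on coordinate vectors\<close>

lemma sum_cross:
  fixes c d q :: nat and g :: "nat \<Rightarrow> nat \<Rightarrow> 'a :: ab_group_add"
  assumes "c \<in> {1..q}" "d \<in> {1..q}"
  shows "(\<Sum>i\<in>{1..q}. \<Sum>j\<in>{1..q}. if c = j \<or> d = i then g i j else 0)
    = (\<Sum>i\<in>{1..q}. g i c) + (\<Sum>j\<in>{1..q}. g d j) - g d c"
proof -
  have "(\<Sum>j\<in>{1..q}. if c = j \<or> d = i then g i j else 0)
      = g i c + (if i = d then (\<Sum>j\<in>{1..q}. g i j) - g i c else 0)" if "i \<in> {1..q}" for i
    using assms by (cases "i = d") (auto simp: if_distrib[of "\<lambda>b. if b then _ else _"]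
        sum.delta' cong: if_cong)
  hence "(\<Sum>i\<in>{1..q}. \<Sum>j\<in>{1..q}. if c = j \<or> d = i then g i j else 0)
      = (\<Sum>i\<in>{1..q}. g i c + (if i = d then (\<Sum>j\<in>{1..q}. g i j) - g i c else 0))"
    by (rule sum.cong[OF refl])
  also have "\<dots> = (\<Sum>i\<in>{1..q}. g i c) + (\<Sum>j\<in>{1..q}. g d j) - g d c"
    using assms by (simp add: sum.distrib sum.delta')
  finally show ?thesis .
qed

lemma sum_sum_delta:
  fixes c d q :: nat and g :: "nat \<Rightarrow> nat \<Rightarrow> 'a :: comm_monoid_add"
  assumes "c \<in> {1..q}" "d \<in> {1..q}"
  shows "(\<Sum>i\<in>{1..q}. \<Sum>j\<in>{1..q}. if c = j \<and> d = i then g i j else 0) = g d c"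
proof -
  have "(\<Sum>i\<in>{1..q}. \<Sum>j\<in>{1..q}. if c = j \<and> d = i then g i j else 0)
      = (\<Sum>i\<in>{1..q}. if d = i then g i c else 0)"
    using assms by (intro sum.cong refl) auto
  also have "\<dots> = g d c" using assms by simp
  finally show ?thesis .
qed

definition KZ_apply :: "nat \<Rightarrow> (pic_gen \<Rightarrow> rat) \<Rightarrow> pic_gen \<Rightarrow> rat" where
  "KZ_apply q f t = (let Q = of_nat q;
      col_sum = (\<lambda>c. \<Sum>i\<in>{1..q}. f (GA i c)); row_sum = (\<lambda>d. \<Sum>j\<in>{1..q}. f (GA d j)) in
     case t of
       GH \<Rightarrow> (Q^2-Q+1) * f GH + (Q^2-Q) * f GR + (\<Sum>i\<in>{1..q}. \<Sum>j\<in>{1..q}. f (GA i j))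
     | GR \<Rightarrow> -(Q-2) * f GH - (Q-1) * f GR
     | GA c d \<Rightarrow> -(2*Q-3) * (f GH + f GR) - (col_sum c + row_sum d - f (GA d c)) + f (GB d c)
     | GB c d \<Rightarrow> -(2*Q-2) * (f GH + f GR) - f (GA d c) - (col_sum c + row_sum d - f (GA d c))
                 + f (GB d c))"

lemma sum_KZ_coef_eq_KZ_apply:
  assumes "t \<in> pic_basis q"
  shows "(\<Sum>k\<in>pic_basis q. of_int (KZ_coef q k t) * f k) = KZ_apply q f t"
  using assms
proof (cases rule: pic_basis_cases)
  case (3 c d)
  have "(\<Sum>i\<in>{1..q}. \<Sum>j\<in>{1..q}. of_int (KZ_coef q (GA i j) t) * f (GA i j))
      = - (\<Sum>i\<in>{1..q}. \<Sum>j\<in>{1..q}. if c = j \<or> d = i then f (GA i j) else 0)"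
    using 3 by (simp add: sum_negf[symmetric]) (intro sum.cong refl, auto simp: T_set_def)
  moreover have "(\<Sum>i\<in>{1..q}. \<Sum>j\<in>{1..q}. of_int (KZ_coef q (GB i j) t) * f (GB i j))
      = (\<Sum>i\<in>{1..q}. \<Sum>j\<in>{1..q}. if c = j \<and> d = i then f (GB i j) else 0)"
    using 3 by (intro sum.cong refl) auto
  moreover have cd: "c \<in> {1..q}" "d \<in> {1..q}" using 3 by auto
  ultimately show ?thesis
    using 3 unfolding sum_pic_basis sum_cross[OF cd] sum_sum_delta[OF cd]
    by (simp add: KZ_apply_def Let_def algebra_simps)
next
  case (4 c d)
  have "(\<Sum>i\<in>{1..q}. \<Sum>j\<in>{1..q}. of_int (KZ_coef q (GA i j) t) * f (GA i j))
      = - (\<Sum>i\<in>{1..q}. \<Sum>j\<in>{1..q}. if c = j \<and> d = i then f (GA i j) else 0)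
        - (\<Sum>i\<in>{1..q}. \<Sum>j\<in>{1..q}. if c = j \<or> d = i then f (GA i j) else 0)"
    using 4 by (simp only: sum_negf[symmetric] sum_subtractf[symmetric])
      (intro sum.cong refl, auto simp: T_set_def)
  moreover have "(\<Sum>i\<in>{1..q}. \<Sum>j\<in>{1..q}. of_int (KZ_coef q (GB i j) t) * f (GB i j))
      = (\<Sum>i\<in>{1..q}. \<Sum>j\<in>{1..q}. if c = j \<and> d = i then f (GB i j) else 0)"
    using 4 by (intro sum.cong refl) auto
  moreover have cd: "c \<in> {1..q}" "d \<in> {1..q}" using 4 by auto
  ultimately show ?thesis
    using 4 unfolding sum_pic_basis sum_cross[OF cd] sum_sum_delta[OF cd]
    by (simp add: KZ_apply_def Let_def algebra_simps)
qed (simp_all add: sum_pic_basis KZ_apply_def Let_def algebra_simps)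

section \<open>The adapted basis\<close>

definition uvec :: "nat \<Rightarrow> nat \<Rightarrow> rat" where
  "uvec a i = (if a = 1 then 1 else if i = a then 1 else 0)"

definition uvec_total :: "nat \<Rightarrow> nat \<Rightarrow> rat" where
  "uvec_total q a = (if a = 1 then of_nat q else 1)"

definition utensor :: "nat \<Rightarrow> nat \<Rightarrow> nat \<Rightarrow> nat \<Rightarrow> rat" where
  "utensor a b i j = (if a = 1 \<and> b \<noteq> 1 then uvec 1 i * uvec b j + uvec b i * uvec 1 j
                      else uvec a i * uvec b j)"

text \<open>wbasis q s t is the t-coordinate of the adapted basis vector w_s.\<close>
definition wbasis :: "nat \<Rightarrow> pic_gen \<Rightarrow> pic_gen \<Rightarrow> rat" where
  "wbasis q s t = (case s of
      GH \<Rightarrow> (if t = GH then 1 else 0)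
    | GR \<Rightarrow> (if t = GR then 1 else 0)
    | GA a b \<Rightarrow> (case t of
          GA i j \<Rightarrow> utensor a b i j
        | GR \<Rightarrow> (if a = 1 \<and> b = 1 then - of_nat q else 0)
        | _ \<Rightarrow> 0)
    | GB a b \<Rightarrow> (case t of
          GB i j \<Rightarrow> utensor a b i j
        | GH \<Rightarrow> (if a = 1 \<and> b = 1 then - of_nat q / 2 else 0)
        | GR \<Rightarrow> (if a = 1 \<and> b = 1 then of_nat q else 0)
        | _ \<Rightarrow> 0))"

text \<open>K_Z^* w_s = \<Sum> c w_t over the pairs (t, c) in wcol q s.\<close>
definition wcol :: "nat \<Rightarrow> pic_gen \<Rightarrow> (pic_gen \<times> rat) list" where
  "wcol q s = (let Q = (of_nat q :: rat) in case s of
     GH \<Rightarrow> [(GH,1), (GR,2), (GA 1 1, -(2*Q-3)), (GB 1 1, -2*(Q-1))]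
   | GR \<Rightarrow> [(GR,1), (GA 1 1, -(2*Q-3)), (GB 1 1, -2*(Q-1))]
   | GA a b \<Rightarrow>
       (if a = 1 \<and> b = 1 then [(GA 1 1, 2*Q^2-5*Q+1), (GB 1 1, 2*(Q^2-2*Q))]
        else if a = 1 then [(GH,Q), (GA 1 1,-2), (GB 1 1,-2), (GA 1 b,1-Q), (GB 1 b,-Q)]
        else if b = 1 then [(GH,Q/2), (GA 1 1,-1), (GB 1 1,-1), (GA 1 a,1-Q), (GA a 1,Q-1),
                            (GB 1 a,-Q), (GB a 1,Q)]
        else [(GH,1), (GA b a,1), (GA b 1,-1), (GB b 1,-1), (GA 1 a,-1), (GA a 1,1),
              (GB 1 a,-1), (GB a 1,1)])
   | GB a b \<Rightarrow>
       (if a = 1 \<and> b = 1 then [(GA 1 1, (2 + 3*Q - 2*Q^2)/2), (GB 1 1, 1 + Q - Q^2)]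
        else if a = 1 then [(GA 1 b,1), (GB 1 b,1)]
        else if b = 1 then [(GA 1 a,1), (GA a 1,-1), (GB 1 a,1), (GB a 1,-1)]
        else [(GA b a,1), (GB b a,1)]))"

definition wmat :: "nat \<Rightarrow> pic_gen \<Rightarrow> pic_gen \<Rightarrow> rat" where
  "wmat q t s = sum_list (map snd (filter (\<lambda>p. fst p = t) (wcol q s)))"

lemma wcol_subset:
  assumes "s \<in> pic_basis q" "q \<ge> 2"
  shows "fst ` set (wcol q s) \<subseteq> pic_basis q"
  using assms by (auto simp: wcol_def Let_def mem_pic_basis split: if_splits)

lemma sum_mult_sum_list_filter:
  fixes f :: "'i \<Rightarrow> 'a :: comm_ring_1"
  assumes "finite G" "fst ` set L \<subseteq> G"
  shows "(\<Sum>k\<in>G. f k * sum_list (map snd (filter (\<lambda>p. fst p = k) L)))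
    = sum_list (map (\<lambda>p. snd p * f (fst p)) L)"
  using assms(2)
proof (induction L)
  case (Cons p L)
  have "(\<Sum>k\<in>G. f k * sum_list (map snd (filter (\<lambda>p. fst p = k) (p # L))))
      = (\<Sum>k\<in>G. (if k = fst p then f k * snd p else 0)
                 + f k * sum_list (map snd (filter (\<lambda>p. fst p = k) L)))"
    by (intro sum.cong refl) (auto simp: algebra_simps)
  also have "\<dots> = f (fst p) * snd p + (\<Sum>k\<in>G. f k * sum_list (map snd (filter (\<lambda>p. fst p = k) L)))"
    using Cons.prems assms(1) by (simp add: sum.distrib sum.delta)
  finally show ?case using Cons by (simp add: mult.commute)
qed simp

lemma sum_uvec:
  fixes a q :: nat assumes "1 \<le> a" "a \<le> q"
  shows "(\<Sum>i\<in>{1..q}. uvec a i) = uvec_total q a"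
    and "(\<Sum>i\<in>{1..q}. uvec a i * x) = uvec_total q a * x"
    and "(\<Sum>i\<in>{1..q}. x * uvec a i) = x * uvec_total q a"
  using assms by (auto simp: uvec_def uvec_total_def sum.delta
      simp flip: sum_distrib_right sum_distrib_left)

lemma sum_utensor:
  fixes a b q :: nat assumes "1 \<le> a" "a \<le> q" "1 \<le> b" "b \<le> q"
  shows "(\<Sum>i\<in>{1..q}. utensor a b i c) = (if a = 1 \<and> b \<noteq> 1
           then uvec_total q 1 * uvec b c + uvec_total q b * uvec 1 c
           else uvec_total q a * uvec b c)"
    and "(\<Sum>j\<in>{1..q}. utensor a b d j) = (if a = 1 \<and> b \<noteq> 1
           then uvec 1 d * uvec_total q b + uvec b d * uvec_total q 1
           else uvec a d * uvec_total q b)"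
    and "(\<Sum>i\<in>{1..q}. \<Sum>j\<in>{1..q}. utensor a b i j) = (if a = 1 \<and> b \<noteq> 1
           then 2 * uvec_total q 1 * uvec_total q b else uvec_total q a * uvec_total q b)"
proof -
  have one: "1 \<le> (1::nat)" "1 \<le> q" using assms by auto
  note sums = sum_uvec[OF assms(1,2)] sum_uvec[OF assms(3,4)] sum_uvec[OF one]
  show "(\<Sum>i\<in>{1..q}. utensor a b i c) = (if a = 1 \<and> b \<noteq> 1
           then uvec_total q 1 * uvec b c + uvec_total q b * uvec 1 c
           else uvec_total q a * uvec b c)"
   and row: "(\<Sum>j\<in>{1..q}. utensor a b d j) = (if a = 1 \<and> b \<noteq> 1
           then uvec 1 d * uvec_total q b + uvec b d * uvec_total q 1
           else uvec a d * uvec_total q b)" for c d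
    unfolding utensor_def using sums by (auto simp: sum.distrib)
  show "(\<Sum>i\<in>{1..q}. \<Sum>j\<in>{1..q}. utensor a b i j) = (if a = 1 \<and> b \<noteq> 1
           then 2 * uvec_total q 1 * uvec_total q b else uvec_total q a * uvec_total q b)"
    unfolding row using sums by (auto simp: sum.distrib uvec_total_def)
qed

lemma KZ_apply_wbasis:
  assumes q: "q \<ge> 2" and s: "s \<in> pic_basis q" and t: "t \<in> pic_basis q"
  shows "KZ_apply q (wbasis q s) t = sum_list (map (\<lambda>p. snd p * wbasis q (fst p) t) (wcol q s))"
proof -
  from t consider "t = GH \<or> t = GR"
    | c d where "1 \<le> c" "c \<le> q" "1 \<le> d" "d \<le> q" "t = GA c d \<or> t = GB c d"
    by (auto elim: pic_basis_cases)
  thus ?thesis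
  proof cases
    case 1
    with s q show ?thesis
      by (elim disjE pic_basis_cases) (simp_all add: KZ_apply_def Let_def wbasis_def wcol_def
          sum_utensor(3) uvec_total_def, (auto simp: utensor_def uvec_def field_simps power2_eq_square))
  next
    case 2
    with s q show ?thesis
      by (elim disjE pic_basis_cases) (simp_all add: KZ_apply_def Let_def wbasis_def wcol_def
          sum_utensor(1,2) uvec_total_def, (auto simp: utensor_def uvec_def field_simps power2_eq_square))
  qed
qed

lemma KZ_wbasis_eq_wbasis_wmat:
  assumes q: "q \<ge> 2" and s: "s \<in> pic_basis q" and t: "t \<in> pic_basis q"
  shows "(\<Sum>k\<in>pic_basis q. of_int (KZ_coef q k t) * wbasis q s k)
       = (\<Sum>k\<in>pic_basis q. wbasis q k t * wmat q k s)"
  using sum_KZ_coef_eq_KZ_apply[OF t] KZ_apply_wbasis[OF assms]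
    sum_mult_sum_list_filter[OF finite_pic_basis wcol_subset[OF s q]]
  unfolding wmat_def by simp

text \<open>w_s only involves basis vectors of smaller weight (and s itself).\<close>
fun wweight :: "pic_gen \<Rightarrow> nat" where
  "wweight (GA a b) = (if a = 1 then 2 else 0) + (if b = 1 then 1 else 0)"
| "wweight (GB a b) = (if a = 1 then 2 else 0) + (if b = 1 then 1 else 0)"
| "wweight _ = 0"

lemma det_on_wbasis: "det_on (pic_basis q) (\<lambda>t s. wbasis q s t) = 1"
proof -
  have "det_on (pic_basis q) (\<lambda>t s. wbasis q s t) = (\<Prod>t\<in>pic_basis q. wbasis q t t)"
    by (rule det_on_triangular[where rank = wweight, OF finite_pic_basis])
      (auto simp: mem_pic_basis wbasis_def utensor_def uvec_def split: if_splits)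
  also have "\<dots> = 1"
    by (rule prod.neutral) (auto simp: mem_pic_basis wbasis_def utensor_def uvec_def)
  finally show ?thesis .
qed

lemma char_poly_KZ_mat_eq_det_on_wmat:
  assumes q: "q \<ge> 2"
  shows "char_poly (map_mat (of_int :: int \<Rightarrow> rat) (KZ_mat q))
       = det_on (pic_basis q) (char_matrix_on (wmat q))"
proof -
  have "map_mat (of_int :: int \<Rightarrow> rat) (KZ_mat q)
      = mat (2 * q^2 + 2) (2 * q^2 + 2) (\<lambda>(r,c). of_int (KZ_coef q (gen_of q c) (gen_of q r)))"
    by (rule eq_matI) (auto simp: KZ_mat_def)
  also have "char_poly \<dots> = det_on (pic_basis q) (char_matrix_on (\<lambda>t s. of_int (KZ_coef q s t)))"
    using char_poly_eq_det_on[OF finite_pic_basis bij_betw_gen_of, of q "\<lambda>t s. of_int (KZ_coef q s t)"] q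
    by simp
  also have "\<dots> = det_on (pic_basis q) (char_matrix_on (wmat q))"
    using det_on_char_matrix_similar[OF finite_pic_basis, where S = "\<lambda>t s. wbasis q s t"]
      det_on_wbasis KZ_wbasis_eq_wbasis_wmat[OF q] by simp
  finally show ?thesis .
qed

section \<open>The diagonal blocks\<close>

datatype pic_block = Blk_11 | Blk_HR | Blk_first_row nat | Blk_first_col nat
  | Blk_A nat nat | Blk_B nat nat

fun block_of :: "pic_gen \<Rightarrow> pic_block" where
  "block_of GH = Blk_HR"
| "block_of GR = Blk_HR"
| "block_of (GA a b) = (if a = 1 \<and> b = 1 then Blk_11 else if a = 1 then Blk_first_row b
     else if b = 1 then Blk_first_col a else Blk_A (min a b) (max a b))"
| "block_of (GB a b) = (if a = 1 \<and> b = 1 then Blk_11 else if a = 1 then Blk_first_row b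
     else if b = 1 then Blk_first_col a else Blk_B (min a b) (max a b))"

fun block_rank :: "pic_block \<Rightarrow> nat" where
  "block_rank Blk_11 = 0"
| "block_rank Blk_HR = 1"
| "block_rank (Blk_first_row c) = 2"
| "block_rank (Blk_first_col c) = 3"
| "block_rank (Blk_A a b) = 4"
| "block_rank (Blk_B a b) = 5"

definition upper_pairs :: "nat \<Rightarrow> (nat \<times> nat) set" where
  "upper_pairs q = {(a,b). 2 \<le> a \<and> a \<le> b \<and> b \<le> q}"

definition strict_upper_pairs :: "nat \<Rightarrow> (nat \<times> nat) set" where
  "strict_upper_pairs q = {(a,b). 2 \<le> a \<and> a < b \<and> b \<le> q}"

definition pic_blocks :: "nat \<Rightarrow> pic_block set" where
  "pic_blocks q = {Blk_11, Blk_HR} \<union> Blk_first_row ` {2..q} \<union> Blk_first_col ` {2..q}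
     \<union> (\<lambda>(a,b). Blk_A a b) ` upper_pairs q \<union> (\<lambda>(a,b). Blk_B a b) ` upper_pairs q"

lemma finite_upper_pairs: "finite (upper_pairs q)"
  by (rule finite_subset[of _ "{0..q} \<times> {0..q}"]) (auto simp: upper_pairs_def)

lemma block_of_pic_basis: "block_of ` pic_basis q \<subseteq> pic_blocks q"
proof
  fix k assume "k \<in> block_of ` pic_basis q"
  then obtain s where "s \<in> pic_basis q" "k = block_of s" by auto
  thus "k \<in> pic_blocks q"
    by (cases rule: pic_basis_cases)
      (auto simp: pic_blocks_def upper_pairs_def image_iff min_def max_def)
qed

lemma wmat_block_triangular:
  assumes "i \<in> pic_basis q" "j \<in> pic_basis q" "block_of i \<noteq> block_of j"
    "block_rank (block_of j) \<le> block_rank (block_of i)"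
  shows "wmat q i j = 0"
proof -
  have "i \<notin> fst ` set (wcol q j)"
    using assms by (auto simp: mem_pic_basis wcol_def Let_def min.commute max.commute split: if_splits)
  hence "filter (\<lambda>p. fst p = i) (wcol q j) = []" by (auto simp: filter_empty_conv)
  thus ?thesis unfolding wmat_def by simp
qed

lemma det_on_char_wmat_eq_prod_blocks:
  "det_on (pic_basis q) (char_matrix_on (wmat q))
     = (\<Prod>k\<in>pic_blocks q. det_on {i\<in>pic_basis q. block_of i = k} (char_matrix_on (wmat q)))"
  by (rule det_on_eq_prod_blocks[where rank = block_rank, OF _ finite_pic_basis block_of_pic_basis])
    (auto simp: finite_upper_pairs pic_blocks_def char_matrix_on_def wmat_block_triangular)

lemma prod_pic_blocks:
  "(\<Prod>k\<in>pic_blocks q. f k) = f Blk_11 * f Blk_HR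
     * (\<Prod>c\<in>{2..q}. f (Blk_first_row c)) * (\<Prod>c\<in>{2..q}. f (Blk_first_col c))
     * (\<Prod>p\<in>upper_pairs q. f (Blk_A (fst p) (snd p)))
     * (\<Prod>p\<in>upper_pairs q. f (Blk_B (fst p) (snd p)))"
proof -
  let ?D = "(\<lambda>(a,b). Blk_A a b) ` upper_pairs q" and ?E = "(\<lambda>(a,b). Blk_B a b) ` upper_pairs q"
  let ?A = "{Blk_11, Blk_HR}" and ?B = "Blk_first_row ` {2..q}" and ?C = "Blk_first_col ` {2..q}"
  have fin: "finite ?A" "finite ?B" "finite ?C" "finite ?D" "finite ?E"
    using finite_upper_pairs by auto
  have "(\<Prod>k\<in>pic_blocks q. f k) = (\<Prod>k\<in>?A \<union> ?B \<union> ?C \<union> ?D. f k) * (\<Prod>k\<in>?E. f k)"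
    unfolding pic_blocks_def by (rule prod.union_disjoint) (use fin in auto)
  also have "(\<Prod>k\<in>?A \<union> ?B \<union> ?C \<union> ?D. f k) = (\<Prod>k\<in>?A \<union> ?B \<union> ?C. f k) * (\<Prod>k\<in>?D. f k)"
    by (rule prod.union_disjoint) (use fin in auto)
  also have "(\<Prod>k\<in>?A \<union> ?B \<union> ?C. f k) = (\<Prod>k\<in>?A \<union> ?B. f k) * (\<Prod>k\<in>?C. f k)"
    by (rule prod.union_disjoint) (use fin in auto)
  also have "(\<Prod>k\<in>?A \<union> ?B. f k) = (\<Prod>k\<in>?A. f k) * (\<Prod>k\<in>?B. f k)"
    by (rule prod.union_disjoint) (use fin in auto)
  also have "(\<Prod>k\<in>?D. f k) = (\<Prod>p\<in>upper_pairs q. f (Blk_A (fst p) (snd p)))"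
    by (subst prod.reindex) (auto simp: inj_on_def intro!: prod.cong)
  also have "(\<Prod>k\<in>?E. f k) = (\<Prod>p\<in>upper_pairs q. f (Blk_B (fst p) (snd p)))"
    by (subst prod.reindex) (auto simp: inj_on_def intro!: prod.cong)
  also have "(\<Prod>k\<in>?B. f k) = (\<Prod>c\<in>{2..q}. f (Blk_first_row c))"
    by (subst prod.reindex) (auto simp: inj_on_def)
  also have "(\<Prod>k\<in>?C. f k) = (\<Prod>c\<in>{2..q}. f (Blk_first_col c))"
    by (subst prod.reindex) (auto simp: inj_on_def)
  finally show ?thesis by simp
qed

lemma card_strict_upper_pairs: "2 * card (strict_upper_pairs q) = (q - 1) * (q - 2)"
proof -
  let ?L = "strict_upper_pairs q" and ?D = "(\<lambda>a. (a,a)) ` {2..q}"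
  have fin: "finite ?L"
    by (rule finite_subset[of _ "{0..q} \<times> {0..q}"]) (auto simp: strict_upper_pairs_def)
  have "{2..q} \<times> {2..q} = (?L \<union> prod.swap ` ?L) \<union> ?D" by (auto simp: strict_upper_pairs_def)
  hence "card ({2..q} \<times> {2..q}) = card (?L \<union> prod.swap ` ?L) + card ?D"
    by (simp only:) (rule card_Un_disjoint; use fin in \<open>auto simp: strict_upper_pairs_def\<close>)
  also have "card (?L \<union> prod.swap ` ?L) = card ?L + card (prod.swap ` ?L)"
    by (rule card_Un_disjoint) (use fin in \<open>auto simp: strict_upper_pairs_def\<close>)
  also have "card (prod.swap ` ?L) = card ?L" by (rule card_image) (auto simp: inj_on_def)
  also have "card ?D = q - 1" by (subst card_image) (auto simp: inj_on_def)
  finally have "2 * card ?L = (q - 1) * (q - 1) - (q - 1)" by simp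
  also have "\<dots> = (q - 1) * (q - 2)" by (simp add: diff_mult_distrib2)
  finally show ?thesis .
qed

lemma det_on_doubleton_char_wmat:
  "x \<noteq> y \<Longrightarrow> det_on {x,y} (char_matrix_on (wmat q))
     = [:- wmat q x x, 1:] * [:- wmat q y y, 1:] - [:wmat q x y * wmat q y x:]"
  by (simp add: det_on_doubleton char_matrix_on_def)

lemmas wmat_simps = det_on_doubleton_char_wmat det_on_singleton char_matrix_on_def wmat_def
  wcol_def Let_def

lemma det_on_char_wmat_blocks:
  "det_on {GA 1 1, GB 1 1} (char_matrix_on (wmat q)) = [:1, - ((of_nat q)^2 - 4 * of_nat q + 2), 1:]"
  "det_on {GH, GR} (char_matrix_on (wmat q)) = [:-1, 1:]^2"
  "2 \<le> c \<Longrightarrow> det_on {GA 1 c, GB 1 c} (char_matrix_on (wmat q)) = [:1, of_nat q - 2, 1:]"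
  "2 \<le> c \<Longrightarrow> det_on {GA c 1, GB c 1} (char_matrix_on (wmat q)) = [:1, - (of_nat q - 2), 1:]"
  "2 \<le> a \<Longrightarrow> a < b \<Longrightarrow> det_on {GA a b, GA b a} (char_matrix_on (wmat q)) = [:-1, 1:] * [:1, 1:]"
  "2 \<le> a \<Longrightarrow> a < b \<Longrightarrow> det_on {GB a b, GB b a} (char_matrix_on (wmat q)) = [:-1, 1:] * [:1, 1:]"
  "2 \<le> a \<Longrightarrow> det_on {GA a a} (char_matrix_on (wmat q)) = [:-1, 1:]"
  "2 \<le> a \<Longrightarrow> det_on {GB a a} (char_matrix_on (wmat q)) = [:-1, 1:]"
  by (auto simp: wmat_simps power2_eq_square) (simp_all add: field_simps one_pCons)

lemma block_fibres:
  "1 \<le> q \<Longrightarrow> {i\<in>pic_basis q. block_of i = Blk_11} = {GA 1 1, GB 1 1}"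
  "{i\<in>pic_basis q. block_of i = Blk_HR} = {GH, GR}"
  "2 \<le> c \<Longrightarrow> c \<le> q \<Longrightarrow> {i\<in>pic_basis q. block_of i = Blk_first_row c} = {GA 1 c, GB 1 c}"
  "2 \<le> c \<Longrightarrow> c \<le> q \<Longrightarrow> {i\<in>pic_basis q. block_of i = Blk_first_col c} = {GA c 1, GB c 1}"
  "2 \<le> a \<Longrightarrow> a \<le> b \<Longrightarrow> b \<le> q \<Longrightarrow> {i\<in>pic_basis q. block_of i = Blk_A a b} = {GA a b, GA b a}"
  "2 \<le> a \<Longrightarrow> a \<le> b \<Longrightarrow> b \<le> q \<Longrightarrow> {i\<in>pic_basis q. block_of i = Blk_B a b} = {GB a b, GB b a}"
  by (auto simp: mem_pic_basis min_def max_def split: if_splits)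

lemma prod_transposition_blocks:
  assumes "\<And>a b. 2 \<le> a \<Longrightarrow> a < b \<Longrightarrow> b \<le> q \<Longrightarrow> f a b = X * Z"
    and "\<And>a. 2 \<le> a \<Longrightarrow> a \<le> q \<Longrightarrow> f a a = (X :: 'a :: comm_monoid_mult)"
  shows "(\<Prod>p\<in>upper_pairs q. f (fst p) (snd p)) = (X * Z) ^ card (strict_upper_pairs q) * X ^ (q - 1)"
proof -
  have split: "upper_pairs q \<inter> {p. fst p < snd p} = strict_upper_pairs q"
    "upper_pairs q \<inter> - {p. fst p < snd p} = (\<lambda>a. (a,a)) ` {2..q}"
    by (auto simp: upper_pairs_def strict_upper_pairs_def)
  have "(\<Prod>p\<in>upper_pairs q. f (fst p) (snd p)) = (\<Prod>p\<in>upper_pairs q. if fst p < snd p then X * Z else X)"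
    using assms by (intro prod.cong) (auto simp: upper_pairs_def)
  also have "\<dots> = (X * Z) ^ card (strict_upper_pairs q) * X ^ card ((\<lambda>a. (a,a)) ` {2..q})"
    by (simp add: prod.If_cases[OF finite_upper_pairs] split)
  also have "card ((\<lambda>a. (a,a)) ` {2..q}) = q - 1" by (subst card_image) (auto simp: inj_on_def)
  finally show ?thesis .
qed

lemma exponents_eq_card_strict_upper_pairs:
  fixes q :: nat
  assumes "q \<ge> 2"
  shows "q^2 + 2 - q = 2 + 2 * card (strict_upper_pairs q) + 2 * (q - 1)"
    and "q^2 + 2 - 3 * q = 2 * card (strict_upper_pairs q)"
proof -
  obtain k where k: "q = k + 2" using assms by (metis add.commute le_Suc_ex)
  show "q^2 + 2 - q = 2 + 2 * card (strict_upper_pairs q) + 2 * (q - 1)"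
       "q^2 + 2 - 3 * q = 2 * card (strict_upper_pairs q)"
    unfolding card_strict_upper_pairs k by (simp_all add: power2_eq_square algebra_simps)
qed

lemma det_on_char_wmat:
  assumes q: "q \<ge> 2"
  shows "det_on (pic_basis q) (char_matrix_on (wmat q))
    = [:1, - ((of_nat q)^2 - 4 * of_nat q + 2), 1:] * ([:1, 0, 1:]^2 - [:0, 0, (of_nat q - 2)^2:]) ^ (q - 1)
      * [:-1, 1:] ^ (q^2 + 2 - q) * [:1, 1:] ^ (q^2 + 2 - 3 * q)"
proof -
  let ?V = "\<lambda>k. det_on {i\<in>pic_basis q. block_of i = k} (char_matrix_on (wmat q))"
  let ?P = "[:1, - ((of_nat q)^2 - 4 * of_nat q + 2), 1::rat:]"
    and ?M1 = "[:1, of_nat q - 2, 1::rat:]" and ?M2 = "[:1, - (of_nat q - 2), 1::rat:]"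
    and ?X = "[:-1, 1::rat:]" and ?Z = "[:1, 1::rat:]" and ?m = "card (strict_upper_pairs q)"
  have "(\<Prod>c\<in>{2..q}. ?V (Blk_first_row c)) = (\<Prod>c\<in>{2..q}. ?M1)"
    and "(\<Prod>c\<in>{2..q}. ?V (Blk_first_col c)) = (\<Prod>c\<in>{2..q}. ?M2)"
    by (auto intro!: prod.cong simp: block_fibres det_on_char_wmat_blocks)
  moreover have "(\<Prod>p\<in>upper_pairs q. ?V (Blk_A (fst p) (snd p))) = (?X * ?Z) ^ ?m * ?X ^ (q - 1)"
    and "(\<Prod>p\<in>upper_pairs q. ?V (Blk_B (fst p) (snd p))) = (?X * ?Z) ^ ?m * ?X ^ (q - 1)"
    by (rule prod_transposition_blocks; simp add: block_fibres det_on_char_wmat_blocks)+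
  ultimately have "det_on (pic_basis q) (char_matrix_on (wmat q))
      = ?P * ?X^2 * ?M1 ^ (q - 1) * ?M2 ^ (q - 1) * ((?X * ?Z) ^ ?m * ?X ^ (q - 1))
        * ((?X * ?Z) ^ ?m * ?X ^ (q - 1))"
    using q by (simp only: det_on_char_wmat_eq_prod_blocks prod_pic_blocks block_fibres
        det_on_char_wmat_blocks prod_constant card_atLeastAtMost) simp
  also have "\<dots> = ?P * (?M1 * ?M2) ^ (q - 1) * ?X ^ (2 + 2 * ?m + 2 * (q - 1)) * ?Z ^ (2 * ?m)"
  proof -
    have "?X ^ (2 + 2 * ?m + 2 * (q - 1)) = ?X^2 * (?X ^ ?m)^2 * (?X ^ (q - 1))^2"
      and "?Z ^ (2 * ?m) = (?Z ^ ?m)^2"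
      by (simp_all only: power_add power_mult[symmetric] mult.commute[of 2])
    thus ?thesis by (simp only: power_mult_distrib power2_eq_square ac_simps)
  qed
  also have "?M1 * ?M2 = [:1, 0, 1:]^2 - [:0, 0, (of_nat q - 2)^2:]"
    by (simp add: power2_eq_square algebra_simps)
  finally show ?thesis by (simp only: exponents_eq_card_strict_upper_pairs[OF q])
qed

theorem proposition6p2:
  fixes q :: nat
  assumes "q \<ge> 2"
  shows "char_poly (KZ_mat q) =
    (let P = [:1, - (int q^2 - 4 * int q + 2), 1:];
         Q = [:1, 0, 1:]^2 - [:0, 0, (int q - 2)^2:]
     in P * Q ^ (q - 1) * [:-1, 1:] ^ (q^2 + 2 - q) * [:1, 1:] ^ (q^2 + 2 - 3 * q))"
proof -
  have "KZ_mat q \<in> carrier_mat (2 * q^2 + 2) (2 * q^2 + 2)" by (simp add: KZ_mat_def)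
  hence "of_int_poly (char_poly (KZ_mat q)) = char_poly (map_mat (of_int :: int \<Rightarrow> rat) (KZ_mat q))"
    by (rule of_int_hom.char_poly_hom[symmetric])
  also have "\<dots> = det_on (pic_basis q) (char_matrix_on (wmat q))"
    by (rule char_poly_KZ_mat_eq_det_on_wmat[OF assms])
  also have "\<dots> = of_int_poly (let P = [:1, - (int q^2 - 4 * int q + 2), 1:];
         Q = [:1, 0, 1:]^2 - [:0, 0, (int q - 2)^2:]
     in P * Q ^ (q - 1) * [:-1, 1:] ^ (q^2 + 2 - q) * [:1, 1:] ^ (q^2 + 2 - 3 * q))"
    unfolding det_on_char_wmat[OF assms] Let_def
    by (simp only: of_int_poly_hom.hom_mult of_int_poly_hom.hom_power of_int_poly_hom.hom_minus
        of_int_hom.map_poly_pCons_hom) simp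
  finally show ?thesis by (rule of_int_poly_hom.injectivity)
qed

end
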